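(* Let $k\ge4$, $\lambda>0$, $0<\theta<1$. Put $\theta_c(k)=\frac{k-1}{k+1}$, $\theta_c'(k)=\frac{k-1}{k}$, $\lambda_{\rm cr}'(k)=\frac{1}{k-1-k\theta}$ (for $\theta<\theta'_c(k)$) and $\lambda_{\rm cr}(k)=\frac{1}{k-1-(k+1)\theta}\bigl(\frac{k+1}{k}\bigr)^k$ (for $\theta<\theta_c(k)$). Then: (1) if $\theta\ge\theta'_c(k)$, or $\theta<\theta'_c(k)$ and $\lambda<\lambda'_{\rm cr}(k)$, there exists exactly one TISGM; (2) if $\theta<\theta_c(k)$ and $\lambda>\lambda_{\rm cr}(k)$, there exist at least three TISGMs.
   Context: SCWR model on the Cayley tree of order $k$ (each vertex has $k$ direct successors), spins in $\{-1,0,1\}$, activity $\lambda>0$, $\theta=e^{-J\beta}$; ferromagnetic means $0<\theta<1$. TISGMs are in one-to-one correspondence with the solutions $(x,y)\in(0,\infty)^2$ of $x=\lambda\bigl(\frac{1+x+\theta y}{1+x+y}\bigr)^k$, $y=\lambda\bigl(\frac{1+\theta x+y}{1+x+y}\bigr)^k$; the number of TISGMs is the number of such solutions. *)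

theory Defs
  imports Complex_Main
begin

text \<open>Positive solutions (x,y) of the SCWR fixed-point system on the Cayley tree of
order k; these are in one-to-one correspondence with the translation-invariant
splitting Gibbs measures (TISGMs).\<close>
definition scwr_tisgm_solutions :: "nat \<Rightarrow> real \<Rightarrow> real \<Rightarrow> (real \<times> real) set" where
  "scwr_tisgm_solutions k lam th =
     {(x, y). x > 0 \<and> y > 0 \<and>
        x = lam * ((1 + x + th * y) / (1 + x + y)) ^ k \<and>
        y = lam * ((1 + th * x + y) / (1 + x + y)) ^ k}"

definition theta_c :: "nat \<Rightarrow> real" where
  "theta_c k = (real k - 1) / (real k + 1)"

definition theta_c' :: "nat \<Rightarrow> real" where
  "theta_c' k = (real k - 1) / real k"

definition lambda_cr' :: "nat \<Rightarrow> real \<Rightarrow> real" where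
  "lambda_cr' k th = 1 / (real k - 1 - real k * th)"

definition lambda_cr :: "nat \<Rightarrow> real \<Rightarrow> real" where
  "lambda_cr k th = 1 / (real k - 1 - (real k + 1) * th) * ((real k + 1) / real k) ^ k"

end

theory Submission
  imports Defs
begin

(* Write p = (1 + x + th y)/(1 + x + y) and q = (1 + th x + y)/(1 + x + y), so that a solution
   satisfies x = lam p^k and y = lam q^k, while p - q = (1 - th)(x - y)/(1 + x + y).
   Uniqueness: for x \<noteq> y, the estimate 2|p^k - q^k| \<le> k |p - q| (p^(k-1) + q^(k-1))
   together with (1 + lam) p^(k-1) \<le> 1 + 2 lam p^k (valid when th \<ge> 1/2 or lam \<le> 1)
   forces lam k (1 - th) \<ge> 1 + lam, which the hypotheses of (1) exclude; on the diagonal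
   the equation t = lam h(t)^k has a single root t0 since h decreases.
   Three solutions: parametrising solutions by p turns the system into one equation
   D(p) = 0 on (th, 1). D vanishes at the diagonal value p0 with D'(p0) < 0 exactly when
   t0 (k - 1 - (k + 1) th) > 1, which lam > lambda_cr guarantees, and D < 0 near th; the
   intermediate value theorem gives a zero below p0, i.e. an asymmetric solution, and its
   mirror image is a third solution. *)

lemma power_rearrangement_le:
  fixes p q :: real
  assumes "0 \<le> p" "0 \<le> q"
  shows "p^i * q^j + q^i * p^j \<le> p^(i+j) + q^(i+j)"
proof -
  have "0 \<le> (p^i - q^i) * (p^j - q^j)"
  proof (cases "p \<le> q")
    case True
    then have "p^i \<le> q^i" "p^j \<le> q^j" using assms by (auto intro: power_mono)
    then show ?thesis by (simp add: mult_nonpos_nonpos)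
  next
    case False
    then have "q^i \<le> p^i" "q^j \<le> p^j" using assms by (auto intro: power_mono)
    then show ?thesis by simp
  qed
  then show ?thesis by (simp add: power_add algebra_simps)
qed

lemma abs_power_diff_le:
  fixes p q :: real
  assumes "0 \<le> p" "0 \<le> q"
  shows "2 * \<bar>p^n - q^n\<bar> \<le> real n * \<bar>p - q\<bar> * (p^(n-1) + q^(n-1))"
proof -
  define f where "f i = q^(n - Suc i) * p^i" for i
  have "2 * sum f {..<n} = (\<Sum>i<n. f i + f (n - Suc i))"
    using sum.nat_diff_reindex[of f n] by (simp add: sum.distrib)
  also have "\<dots> \<le> (\<Sum>i<n. p^(n-1) + q^(n-1))"
  proof (rule sum_mono)
    fix i assume "i \<in> {..<n}"
    then have i: "i < n" by simp
    have "f i + f (n - Suc i) = p^i * q^(n - Suc i) + q^i * p^(n - Suc i)"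
      using i by (simp add: f_def Suc_diff_Suc algebra_simps)
    also have "\<dots> \<le> p^(n-1) + q^(n-1)"
      using power_rearrangement_le[OF assms, of i "n - Suc i"] i by simp
    finally show "f i + f (n - Suc i) \<le> p^(n-1) + q^(n-1)" .
  qed
  finally have "2 * sum f {..<n} \<le> real n * (p^(n-1) + q^(n-1))" by simp
  then have "\<bar>p - q\<bar> * (2 * sum f {..<n}) \<le> \<bar>p - q\<bar> * (real n * (p^(n-1) + q^(n-1)))"
    by (rule mult_left_mono) simp
  moreover have "\<bar>p^n - q^n\<bar> = \<bar>p - q\<bar> * sum f {..<n}"
    unfolding f_def power_diff_sumr2 abs_mult using assms by (simp add: sum_nonneg)
  ultimately show ?thesis by (simp add: algebra_simps)
qed

lemma one_plus_mult_power_pred_le: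
  fixes p lam :: real
  assumes "0 < p" "p \<le> 1" "k \<ge> 2" "0 < lam" "p \<ge> 1/2 \<or> lam \<le> 1"
  shows "(1 + lam) * p^(k-1) \<le> 1 + 2 * lam * p^k"
proof -
  define u where "u = p^(k-1)"
  have pk: "p^k = p * u" unfolding u_def using assms(3) by (simp flip: power_Suc)
  have u: "0 < u" "u \<le> 1" unfolding u_def using assms by (auto simp: power_le_one)
  have "u \<le> p" unfolding u_def using assms power_decreasing[of 1 "k-1" p] by simp
  have "(1 + lam) * u \<le> 1 + 2 * lam * (p * u)"
  proof (cases "p \<ge> 1/2")
    case True
    then have "0 \<le> lam * u * (2 * p - 1)" using u assms by simp
    then show ?thesis using u by (simp add: algebra_simps)
  next
    case False
    then have "lam * u \<le> u" using assms u by (simp add: mult_left_le_one_le)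
    moreover have "0 \<le> lam * u * p" using u assms by simp
    ultimately show ?thesis using \<open>u \<le> p\<close> False by (simp add: algebra_simps)
  qed
  then show ?thesis using pk u_def by simp
qed

lemma scwr_tisgm_solutions_swap:
  "(x, y) \<in> scwr_tisgm_solutions k lam th \<Longrightarrow> (y, x) \<in> scwr_tisgm_solutions k lam th"
  unfolding scwr_tisgm_solutions_def by (simp add: add_ac)

locale scwr_model =
  fixes k :: nat and lam th :: real
  assumes lam_pos: "0 < lam" and th_pos: "0 < th" and th_less_one: "th < 1"
begin

abbreviation solutions :: "(real \<times> real) set" where
  "solutions \<equiv> scwr_tisgm_solutions k lam th"

definition diag_ratio :: "real \<Rightarrow> real" where
  "diag_ratio t = (1 + t + th * t) / (1 + t + t)"

lemma diag_ratio_pos: "0 \<le> t \<Longrightarrow> 0 < diag_ratio t"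
  unfolding diag_ratio_def using th_pos by (simp add: add_pos_nonneg)

lemma diag_ratio_le_one: "0 \<le> t \<Longrightarrow> diag_ratio t \<le> 1"
  unfolding diag_ratio_def using th_pos th_less_one mult_left_le_one_le[of t th] by simp

lemma diag_ratio_antimono:
  assumes "0 \<le> a" "a \<le> b"
  shows "diag_ratio b \<le> diag_ratio a"
proof -
  have "(1 - th) * a \<le> (1 - th) * b" using assms th_less_one by (intro mult_left_mono) auto
  then have "(1 + b + th * b) * (1 + a + a) \<le> (1 + a + th * a) * (1 + b + b)"
    by (simp add: algebra_simps)
  then show ?thesis unfolding diag_ratio_def using assms by (simp add: divide_simps mult.commute)
qed

lemma diag_mem_solutions_iff: "(t, t) \<in> solutions \<longleftrightarrow> 0 < t \<and> t = lam * diag_ratio t ^ k"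
  unfolding scwr_tisgm_solutions_def diag_ratio_def by (auto simp: algebra_simps)

lemma ex1_diag_solution: "\<exists>!t. (t, t) \<in> solutions"
proof (rule ex_ex1I)
  define f where "f t = t - lam * diag_ratio t ^ k" for t
  have "continuous_on {0..lam} f" unfolding f_def diag_ratio_def
    by (intro continuous_intros) (auto simp: add_pos_nonneg)
  moreover have "f 0 \<le> 0" unfolding f_def diag_ratio_def using lam_pos by simp
  moreover have "0 \<le> f lam"
    using power_le_one[OF less_imp_le[OF diag_ratio_pos] diag_ratio_le_one, of lam k] lam_pos
    unfolding f_def by (simp add: mult_left_le_one_le)
  ultimately obtain t where t: "0 \<le> t" "t \<le> lam" "f t = 0"
    using IVT'[of f 0 0 lam] lam_pos by auto
  moreover have "t \<noteq> 0" using t lam_pos unfolding f_def diag_ratio_def by auto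
  ultimately show "\<exists>t. (t, t) \<in> solutions"
    unfolding diag_mem_solutions_iff f_def by (auto intro!: exI[of _ t])
next
  have False if "(a, a) \<in> solutions" "(b, b) \<in> solutions" "a < b" for a b
  proof -
    have "diag_ratio b ^ k \<le> diag_ratio a ^ k"
      using that diag_ratio_antimono unfolding diag_mem_solutions_iff
      by (intro power_mono) (auto intro: less_imp_le[OF diag_ratio_pos])
    then have "b \<le> a" using that lam_pos unfolding diag_mem_solutions_iff
      by (metis mult_left_mono less_imp_le)
    then show False using \<open>a < b\<close> by simp
  qed
  then show "\<And>a b. (a, a) \<in> solutions \<Longrightarrow> (b, b) \<in> solutions \<Longrightarrow> a = b"
    by (meson linorder_neqE)
qed

definition diag_point :: real where
  "diag_point = (THE t. (t, t) \<in> solutions)"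

lemma diag_point_mem: "(diag_point, diag_point) \<in> solutions"
  unfolding diag_point_def using theI'[OF ex1_diag_solution] .

lemma diag_point_unique: "(t, t) \<in> solutions \<Longrightarrow> t = diag_point"
  using diag_point_mem ex1_diag_solution by blast

lemma diag_point_pos: "0 < diag_point"
  using diag_point_mem diag_mem_solutions_iff by blast

lemma first_ratio_bounds:
  assumes "(x, y) \<in> solutions"
  shows "th < (1 + x + th * y) / (1 + x + y)" "(1 + x + th * y) / (1 + x + y) \<le> 1"
proof -
  have "0 < x" "0 < y" using assms unfolding scwr_tisgm_solutions_def by auto
  then have "th * x < x" "th * y < y" using th_less_one by simp_all
  then have "th * (1 + x + y) < 1 + x + th * y"
    unfolding ring_distribs using th_less_one by linarith
  then show "th < (1 + x + th * y) / (1 + x + y)" "(1 + x + th * y) / (1 + x + y) \<le> 1"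
    using \<open>0 < x\<close> \<open>0 < y\<close> \<open>th * y < y\<close> by (simp_all add: field_simps)
qed

lemma solution_symmetric:
  assumes "k \<ge> 2" and contract: "lam * real k * (1 - th) < 1 + lam"
    and half: "th \<ge> 1/2 \<or> lam \<le> 1" and sol: "(x, y) \<in> solutions"
  shows "x = y"
proof (rule ccontr)
  assume "x \<noteq> y"
  define s where "s = 1 + x + y"
  define p where "p = (1 + x + th * y) / s"
  define q where "q = (1 + th * x + y) / s"
  have pos: "0 < x" "0 < y" and x: "x = lam * p^k" and y: "y = lam * q^k"
    using sol unfolding scwr_tisgm_solutions_def p_def q_def s_def by auto
  have "0 < s" using pos s_def by simp
  have p: "th < p" "p \<le> 1" using first_ratio_bounds[OF sol] unfolding p_def s_def by auto
  have q: "th < q" "q \<le> 1" using first_ratio_bounds[OF scwr_tisgm_solutions_swap[OF sol]]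
    unfolding q_def s_def by (simp_all add: add_ac)
  have "p - q = (1 - th) * (x - y) / s"
    unfolding p_def q_def using \<open>0 < s\<close> by (simp add: field_simps)
  then have pq: "\<bar>p - q\<bar> = (1 - th) * \<bar>x - y\<bar> / s"
    using \<open>0 < s\<close> th_less_one by (simp add: abs_mult)
  define P where "P = p^(k-1) + q^(k-1)"
  have "0 < P" using p q th_pos unfolding P_def by (simp add: add_pos_pos)
  have "2 * \<bar>x - y\<bar> = lam * (2 * \<bar>p^k - q^k\<bar>)"
    using x y lam_pos by (simp add: right_diff_distrib[symmetric] abs_mult)
  also have "\<dots> \<le> lam * (real k * \<bar>p - q\<bar> * P)"
    unfolding P_def using abs_power_diff_le p q th_pos lam_pos by (intro mult_left_mono) auto
  also have "\<dots> = \<bar>x - y\<bar> * (lam * real k * (1 - th) * P) / s"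
    unfolding pq by simp
  finally have "\<bar>x - y\<bar> * (2 * s) \<le> \<bar>x - y\<bar> * (lam * real k * (1 - th) * P)"
    using \<open>0 < s\<close> by (simp add: pos_le_divide_eq algebra_simps)
  then have "2 * s \<le> lam * real k * (1 - th) * P"
    using \<open>x \<noteq> y\<close> by simp
  also have "\<dots> < (1 + lam) * P" using contract \<open>0 < P\<close> by simp
  also have "\<dots> \<le> (1 + 2 * lam * p^k) + (1 + 2 * lam * q^k)"
    unfolding P_def distrib_left using p q th_pos lam_pos half \<open>k \<ge> 2\<close>
    by (intro add_mono one_plus_mult_power_pred_le) auto
  also have "\<dots> = 2 * s" unfolding s_def x y by simp
  finally show False by simp
qed

lemma solutions_eq_diag:
  assumes "k \<ge> 2" "lam * real k * (1 - th) < 1 + lam" "th \<ge> 1/2 \<or> lam \<le> 1"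
  shows "solutions = {(diag_point, diag_point)}"
  using solution_symmetric[OF assms] diag_point_mem diag_point_unique by fast

lemma uniqueness_regime:
  assumes "k \<ge> 4" "th \<ge> theta_c' k \<or> (th < theta_c' k \<and> lam < lambda_cr' k th)"
  shows "lam * real k * (1 - th) < 1 + lam" "th \<ge> 1/2 \<or> lam \<le> 1"
proof -
  have k: "real k \<ge> 4" using assms(1) by simp
  consider "th \<ge> theta_c' k" | "th < theta_c' k" "lam < lambda_cr' k th" using assms(2) by blast
  then have "lam * real k * (1 - th) < 1 + lam \<and> (th \<ge> 1/2 \<or> lam \<le> 1)"
  proof cases
    case 1
    then have "real k * (1 - th) \<le> 1" using k unfolding theta_c'_def by (simp add: field_simps)
    then have "lam * (real k * (1 - th)) \<le> lam" using lam_pos by (intro mult_left_le) auto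
    moreover have "1/2 \<le> theta_c' k" using k unfolding theta_c'_def by (simp add: field_simps)
    ultimately show ?thesis using 1 by simp
  next
    case 2
    then have "0 < real k - 1 - real k * th" using k unfolding theta_c'_def by (simp add: field_simps)
    then have lt: "lam * (real k - 1 - real k * th) < 1"
      using 2 unfolding lambda_cr'_def by (simp add: field_simps)
    have "lam \<le> 1" if "th < 1/2"
    proof -
      have "real k * th \<le> real k * (1/2)" using that by (intro mult_left_mono) auto
      then have "1 \<le> real k - 1 - real k * th" using k by linarith
      then have "lam * 1 \<le> lam * (real k - 1 - real k * th)" using lam_pos by (intro mult_left_mono) auto
      then show ?thesis using lt by simp
    qed
    moreover have "lam * real k * (1 - th) < 1 + lam" using lt by (simp add: algebra_simps)
    ultimately show ?thesis by linarith
  qed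
  then show "lam * real k * (1 - th) < 1 + lam" "th \<ge> 1/2 \<or> lam \<le> 1" by auto
qed

(* A solution is parametrised by its first ratio p = (1 + x + th y)/(1 + x + y): the first
   equation gives x = lam p^k, the definition of p then determines y, and the second equation
   becomes param_defect p = 0. *)
definition param_x :: "real \<Rightarrow> real" where
  "param_x p = lam * p^k"

definition param_y :: "real \<Rightarrow> real" where
  "param_y p = (1 - p) * (1 + lam * p^k) / (p - th)"

definition param_q :: "real \<Rightarrow> real" where
  "param_q p = (1 + th * param_x p + param_y p) / (1 + param_x p + param_y p)"

definition param_defect :: "real \<Rightarrow> real" where
  "param_defect p = lam * param_q p ^ k - param_y p"

lemma param_pos:
  assumes "th < p" "p < 1"
  shows "0 < param_x p" "0 < param_y p"
  unfolding param_x_def param_y_def using assms th_pos lam_pos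
  by (auto intro!: divide_pos_pos mult_pos_pos add_pos_nonneg)

lemma param_mem_solutions:
  assumes "th < p" "p < 1" "param_defect p = 0"
  shows "(param_x p, param_y p) \<in> solutions"
proof -
  define x y where "x = param_x p" and "y = param_y p"
  have "0 < x" "0 < y" using param_pos assms unfolding x_def y_def by auto
  have "y * (p - th) = (1 - p) * (1 + x)" unfolding x_def y_def param_x_def param_y_def
    using assms by simp
  then have "1 + x + th * y = p * (1 + x + y)" by (simp add: algebra_simps)
  then have "x = lam * ((1 + x + th * y) / (1 + x + y))^k"
    using \<open>0 < x\<close> \<open>0 < y\<close> unfolding x_def by (simp add: param_x_def)
  moreover have "y = lam * ((1 + th * x + y) / (1 + x + y))^k"
    using assms(3) unfolding param_defect_def param_q_def x_def y_def by simp
  ultimately show ?thesis using \<open>0 < x\<close> \<open>0 < y\<close>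
    unfolding scwr_tisgm_solutions_def x_def y_def by simp
qed

lemma param_defect_continuous:
  assumes "th < a" "b < 1"
  shows "continuous_on {a..b} param_defect"
proof (intro continuous_at_imp_continuous_on ballI)
  fix p assume "p \<in> {a..b}"
  then have p: "th < p" "p < 1" using assms by auto
  then have "1 + param_x p + param_y p \<noteq> 0" using param_pos[OF p] by simp
  then show "isCont param_defect p"
    unfolding param_defect_def param_q_def using p
    unfolding param_x_def param_y_def by (intro continuous_intros) auto
qed

lemma param_defect_neg_near_th:
  assumes "th < p1"
  obtains p where "th < p" "p < p1" "param_defect p < 0"
proof -
  define d where "d = min ((p1 - th) / 2) ((1 - th) / (2 * (1 + lam)))"
  have "0 < d" unfolding d_def using assms th_less_one lam_pos by auto
  have "d \<le> (p1 - th) / 2" unfolding d_def by (rule min.cobounded1)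
  then have "d < p1 - th" using assms by simp
  have "d \<le> (1 - th) / (2 * (1 + lam))" unfolding d_def by (rule min.cobounded2)
  then have "d + lam * d \<le> (1 - th) / 2" using lam_pos by (simp add: field_simps)
  then have "lam * d < 1 - (th + d)" using th_less_one by (simp add: field_simps)
  moreover have "0 < lam * d" using lam_pos \<open>0 < d\<close> by simp
  ultimately have "th + d < 1" by linarith
  define p where "p = th + d"
  have p: "th < p" "p < 1" using \<open>0 < d\<close> \<open>th + d < 1\<close> unfolding p_def by auto
  have "param_q p \<le> 1" "0 \<le> param_q p"
    using param_pos[OF p] th_less_one th_pos mult_left_le_one_le[of "param_x p" th]
    unfolding param_q_def by (simp_all add: field_simps)
  then have "lam * param_q p ^ k \<le> lam" using lam_pos by (simp add: power_le_one mult_left_le)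
  also have "lam < (1 - p) / d" using \<open>lam * d < 1 - (th + d)\<close> \<open>0 < d\<close>
    unfolding p_def by (simp add: field_simps)
  also have "\<dots> \<le> (1 - p) * (1 + lam * p^k) / d"
    using p th_pos \<open>0 < d\<close> lam_pos by (intro divide_right_mono) auto
  also have "\<dots> = param_y p" unfolding param_y_def p_def by simp
  finally show ?thesis using that[of p] p \<open>d < p1 - th\<close> unfolding param_defect_def p_def by auto
qed

definition diag_param :: real where
  "diag_param = diag_ratio diag_point"

lemma diag_param_eq: "diag_param * (1 + 2 * diag_point) = 1 + diag_point + th * diag_point"
  unfolding diag_param_def diag_ratio_def using diag_point_pos by (simp add: field_simps)

lemma diag_param_bounds: "th < diag_param" "diag_param < 1" "1 + th < 2 * diag_param"
proof -
  let ?t = diag_point and ?s = "1 + 2 * diag_point"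
  have "0 < ?s" using diag_point_pos by simp
  have "th * ?t < ?t" "0 < th * ?t" using diag_point_pos th_less_one th_pos by simp_all
  then have "th * ?s < diag_param * ?s" "diag_param * ?s < 1 * ?s"
    "(1 + th) * ?s < (2 * diag_param) * ?s"
    unfolding diag_param_eq mult.assoc[of 2] using th_less_one by (simp_all add: algebra_simps)
  then show "th < diag_param" "diag_param < 1" "1 + th < 2 * diag_param"
    using \<open>0 < ?s\<close> mult_less_cancel_right_pos by blast+
qed

lemma param_x_diag: "param_x diag_param = diag_point"
  using diag_point_mem unfolding diag_mem_solutions_iff param_x_def diag_param_def by simp

lemma param_y_diag: "param_y diag_param = diag_point"
proof -
  have "(1 - diag_param) * (1 + diag_point) = (diag_param - th) * diag_point"
    using diag_param_eq by (simp add: algebra_simps)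
  then show ?thesis
    using param_x_diag diag_param_bounds unfolding param_y_def param_x_def by (simp add: field_simps)
qed

lemma param_q_diag: "param_q diag_param = diag_param"
  using diag_param_eq diag_point_pos
  unfolding param_q_def param_x_diag param_y_diag by (simp add: field_simps)

lemma param_defect_diag: "param_defect diag_param = 0"
  using param_x_diag param_y_diag unfolding param_defect_def param_q_diag param_x_def by simp

lemma param_x_has_derivative: "(param_x has_real_derivative lam * real k * p^(k-1)) (at p)"
  unfolding param_x_def[abs_def] by (auto intro!: derivative_eq_intros)

lemma param_y_has_derivative_at_diag:
  fixes A :: real
  assumes A: "A = lam * real k * diag_param^(k-1)"
  shows "(param_y has_real_derivative
    (A * (1 - diag_param) - (1 + 2 * diag_point)) / (diag_param - th)) (at diag_param)"
proof -
  let ?p = diag_param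
  have "0 < ?p - th" using diag_param_bounds by simp
  have N: "(1 - ?p) * (1 + lam * ?p^k) = (?p - th) * diag_point"
    using param_y_diag \<open>0 < ?p - th\<close> unfolding param_y_def by (simp add: field_simps)
  have "((\<lambda>p. (1 - p) * (1 + lam * p^k)) has_real_derivative
      (1 - ?p) * A - (1 + lam * ?p^k)) (at ?p)"
    unfolding A by (auto intro!: derivative_eq_intros simp: algebra_simps)
  then have "(param_y has_real_derivative
      (((1 - ?p) * A - (1 + lam * ?p^k)) * (?p - th) - (1 - ?p) * (1 + lam * ?p^k) * 1)
        / ((?p - th) * (?p - th))) (at ?p)"
    unfolding param_y_def[abs_def] using \<open>0 < ?p - th\<close>
    by (intro DERIV_divide) (auto intro!: derivative_eq_intros)
  then show ?thesis
  proof (rule DERIV_cong)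
    have "lam * ?p^k = diag_point" using param_x_diag unfolding param_x_def .
    then have "((1 - ?p) * A - (1 + lam * ?p^k)) * (?p - th) - (1 - ?p) * (1 + lam * ?p^k) * 1
        = (?p - th) * (A * (1 - ?p) - (1 + 2 * diag_point))"
      unfolding N by (simp add: algebra_simps)
    then show "(((1 - ?p) * A - (1 + lam * ?p^k)) * (?p - th) - (1 - ?p) * (1 + lam * ?p^k) * 1)
        / ((?p - th) * (?p - th)) = (A * (1 - ?p) - (1 + 2 * diag_point)) / (?p - th)"
      using \<open>0 < ?p - th\<close> by simp
  qed
qed

lemma param_defect_has_derivative_at_diag:
  fixes A B :: real
  assumes A: "A = lam * real k * diag_param^(k-1)"
    and B: "B = (A * (1 - diag_param) - (1 + 2 * diag_point)) / (diag_param - th)"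
  shows "(param_defect has_real_derivative
    A * ((A * (th - diag_param) + B * (1 - diag_param)) / (1 + 2 * diag_point)) - B) (at diag_param)"
proof -
  let ?p = diag_param and ?s = "1 + 2 * diag_point"
  have "0 < ?s" using diag_point_pos by simp
  have dx: "(param_x has_real_derivative A) (at ?p)"
    using param_x_has_derivative unfolding A .
  have dy: "(param_y has_real_derivative B) (at ?p)"
    using param_y_has_derivative_at_diag[OF A] unfolding B .
  have sums: "1 + param_x ?p + param_y ?p = ?s" "1 + th * param_x ?p + param_y ?p = ?p * ?s"
    using diag_param_eq unfolding param_x_diag param_y_diag by (simp_all add: algebra_simps)
  have "(param_q has_real_derivative
      ((th * A + B) * ?s - ?p * ?s * (A + B)) / (?s * ?s)) (at ?p)"
    unfolding param_q_def[abs_def] using dx dy \<open>0 < ?s\<close>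
    by (auto intro!: derivative_eq_intros simp: sums)
  moreover have "(th * A + B) * ?s - ?p * ?s * (A + B) = ?s * (A * (th - ?p) + B * (1 - ?p))"
    by (simp add: algebra_simps)
  ultimately have dq: "(param_q has_real_derivative (A * (th - ?p) + B * (1 - ?p)) / ?s) (at ?p)"
    using \<open>0 < ?s\<close> by simp
  show ?thesis
    unfolding param_defect_def[abs_def]
    using DERIV_power[OF dq, of k] dy param_q_diag unfolding A
    by (auto intro!: derivative_eq_intros elim!: DERIV_cong)
qed

lemma param_defect_deriv_at_diag_neg:
  fixes A B :: real
  assumes "1 \<le> k" and above: "1 < diag_point * (real k - 1 - (real k + 1) * th)"
    and A: "A = lam * real k * diag_param^(k-1)"
    and B: "B = (A * (1 - diag_param) - (1 + 2 * diag_point)) / (diag_param - th)"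
  shows "A * ((A * (th - diag_param) + B * (1 - diag_param)) / (1 + 2 * diag_point)) - B < 0"
proof -
  let ?p = diag_param and ?s = "1 + 2 * diag_point" and ?t = diag_point
  have "0 < ?s" "th < ?p" "1 + th < 2 * ?p" using diag_point_pos diag_param_bounds by auto
  have "A * ?p = real k * (lam * ?p^k)"
    unfolding A using \<open>1 \<le> k\<close> by (simp add: power_eq_if)
  then have Ap: "A * ?p = real k * ?t" using param_x_diag unfolding param_x_def by simp
  have "0 < A * ?p" unfolding Ap using diag_point_pos \<open>1 \<le> k\<close> by simp
  then have "0 < A" using \<open>th < ?p\<close> th_pos by (simp add: zero_less_mult_iff)
  define W where "W = A * (1 - ?p) - ?s"
  have BW: "B * (?p - th) = W" unfolding B W_def using \<open>th < ?p\<close> by simp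
  \<comment> \<open>The derivative factors as a difference of squares; the first factor is negative because
    2 diag_param > 1 + th, the second is positive precisely because of the hypothesis above.\<close>
  define X where "X = A * (th - ?p) + B * (1 - ?p)"
  have "(A * (X / ?s) - B) * (?s * (?p - th)) = A * X * (?p - th) - B * (?p - th) * ?s"
    using \<open>0 < ?s\<close> by (simp add: field_simps)
  also have "\<dots> = B * (?p - th) * (A * (1 - ?p) - ?s) - (A * (?p - th)) * (A * (?p - th))"
    unfolding X_def by (simp add: algebra_simps)
  also have "\<dots> = W * W - (A * (?p - th)) * (A * (?p - th))"
    unfolding BW by (simp add: W_def)
  finally have factor: "(A * (X / ?s) - B) * (?s * (?p - th))
      = (W - A * (?p - th)) * (W + A * (?p - th))"
    by (simp add: algebra_simps)
  have neg: "W - A * (?p - th) < 0"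
    using \<open>0 < A\<close> \<open>0 < ?s\<close> \<open>1 + th < 2 * ?p\<close> mult_pos_neg[of A "1 + th - 2 * ?p"]
    unfolding W_def by (simp add: algebra_simps)
  have "(W + A * (?p - th)) * ?p = (A * ?p) * (1 - th) - ?p * ?s"
    unfolding W_def by (simp add: algebra_simps)
  also have "\<dots> = ?t * (real k - 1 - (real k + 1) * th) - 1"
    unfolding Ap diag_param_eq by (simp add: algebra_simps)
  finally have "0 < (W + A * (?p - th)) * ?p" using above by simp
  then have "0 < W + A * (?p - th)"
    using \<open>th < ?p\<close> th_pos by (simp add: zero_less_mult_iff)
  then have "(A * (X / ?s) - B) * (?s * (?p - th)) < 0"
    unfolding factor using neg by (simp add: mult_neg_pos)
  then show ?thesis unfolding X_def using \<open>0 < ?s\<close> \<open>th < ?p\<close> by (simp add: mult_less_0_iff)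
qed

lemma param_defect_pos_below_diag:
  assumes "1 \<le> k" "1 < diag_point * (real k - 1 - (real k + 1) * th)"
  obtains p where "th < p" "p < diag_param" "0 < param_defect p"
proof -
  define A where "A = lam * real k * diag_param^(k-1)"
  define B where "B = (A * (1 - diag_param) - (1 + 2 * diag_point)) / (diag_param - th)"
  obtain d where "0 < d" and d: "\<And>h. 0 < h \<Longrightarrow> h < d \<Longrightarrow> 0 < param_defect (diag_param - h)"
    using DERIV_neg_dec_left[OF param_defect_has_derivative_at_diag[OF A_def B_def]
        param_defect_deriv_at_diag_neg[OF assms A_def B_def]]
    unfolding param_defect_diag by blast
  define h where "h = min (d / 2) ((diag_param - th) / 2)"
  have "0 < h" using \<open>0 < d\<close> diag_param_bounds(1) unfolding h_def by simp
  moreover have "h \<le> d / 2" "h \<le> (diag_param - th) / 2"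
    unfolding h_def by (rule min.cobounded1, rule min.cobounded2)
  then have "h < d" "h < diag_param - th" using \<open>0 < d\<close> \<open>0 < h\<close> by auto
  ultimately show ?thesis using that[of "diag_param - h"] d by auto
qed

lemma ex_asymmetric_solution:
  assumes "1 \<le> k" "1 < diag_point * (real k - 1 - (real k + 1) * th)"
  obtains x y where "(x, y) \<in> solutions" "x \<noteq> y"
proof -
  obtain p1 where p1: "th < p1" "p1 < diag_param" "0 < param_defect p1"
    using param_defect_pos_below_diag[OF assms] .
  obtain p2 where p2: "th < p2" "p2 < p1" "param_defect p2 < 0"
    using param_defect_neg_near_th[OF p1(1)] .
  have "p1 < 1" using p1 diag_param_bounds by simp
  obtain p where p: "p2 \<le> p" "p \<le> p1" "param_defect p = 0"
    using IVT'[of param_defect p2 0 p1] param_defect_continuous[OF p2(1) \<open>p1 < 1\<close>] p1 p2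
    by auto
  have "th < p" "p < 1" using p p1 p2 \<open>p1 < 1\<close> by auto
  have "param_x p \<noteq> param_y p"
  proof
    assume "param_x p = param_y p"
    then have "param_x p = diag_point"
      using param_mem_solutions[OF \<open>th < p\<close> \<open>p < 1\<close> p(3)] diag_point_unique by simp
    then have "lam * p^k = lam * diag_param^k"
      using param_x_diag unfolding param_x_def by simp
    then have "p^k = diag_param^k" using lam_pos by simp
    then have "p = diag_param"
      using \<open>th < p\<close> diag_param_bounds th_pos \<open>1 \<le> k\<close> by (auto intro: power_eq_imp_eq_base)
    then show False using p p1 by simp
  qed
  then show ?thesis
    using that param_mem_solutions[OF \<open>th < p\<close> \<open>p < 1\<close> p(3)] by blast
qed

lemma diag_point_above_critical:
  assumes "1 \<le> k" "th < theta_c k" "lambda_cr k th < lam"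
  shows "1 < diag_point * (real k - 1 - (real k + 1) * th)"
proof -
  define c where "c = real k - 1 - (real k + 1) * th"
  have "0 < c" using assms(2) unfolding c_def theta_c_def by (simp add: field_simps)
  \<comment> \<open>At t = 1/c the diagonal ratio equals k/(k+1), and lambda_cr is exactly the activity
    for which t = 1/c solves the diagonal equation.\<close>
  have "diag_ratio (1 / c) = real k / (real k + 1)"
  proof -
    have "1 + 1 / c + th * (1 / c) = (c + 1 + th) / c" "1 + 1 / c + 1 / c = (c + 2) / c"
      using \<open>0 < c\<close> by (simp_all add: field_simps)
    then have "diag_ratio (1 / c) = (c + 1 + th) / (c + 2)"
      unfolding diag_ratio_def using \<open>0 < c\<close> by simp
    moreover have "c + 1 + th = real k * (1 - th)" "c + 2 = (real k + 1) * (1 - th)"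
      unfolding c_def by (simp_all add: algebra_simps)
    ultimately show ?thesis using th_less_one by simp
  qed
  moreover have "lambda_cr k th * (real k / (real k + 1))^k = 1 / c"
  proof -
    have "((real k + 1) / real k)^k * (real k / (real k + 1))^k = 1"
      unfolding power_mult_distrib[symmetric] using \<open>1 \<le> k\<close> by simp
    then show ?thesis unfolding lambda_cr_def c_def by (simp add: mult.assoc)
  qed
  moreover have "0 < (real k / (real k + 1))^k" using \<open>1 \<le> k\<close> by simp
  ultimately have crit: "1 / c < lam * diag_ratio (1 / c) ^ k"
    using mult_strict_right_mono[OF assms(3)] by metis
  have "1 / c < diag_point"
  proof (rule ccontr)
    assume "\<not> 1 / c < diag_point"
    then have "diag_ratio (1 / c) ^ k \<le> diag_ratio diag_point ^ k"
      using diag_point_pos diag_ratio_antimono diag_ratio_pos[of "1 / c"] \<open>0 < c\<close>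
      by (intro power_mono) auto
    then have "lam * diag_ratio (1 / c) ^ k \<le> diag_point"
      using diag_point_mem lam_pos unfolding diag_mem_solutions_iff by (metis mult_left_mono less_imp_le)
    then show False using crit \<open>\<not> 1 / c < diag_point\<close> by simp
  qed
  then show ?thesis using \<open>0 < c\<close> unfolding c_def by (simp add: field_simps)
qed

lemma three_solutions:
  assumes "1 \<le> k" "th < theta_c k" "lambda_cr k th < lam"
  shows "\<exists>S \<subseteq> solutions. finite S \<and> card S = 3"
proof -
  obtain x y where xy: "(x, y) \<in> solutions" "x \<noteq> y"
    using ex_asymmetric_solution[OF \<open>1 \<le> k\<close> diag_point_above_critical[OF assms]] .
  let ?S = "{(diag_point, diag_point), (x, y), (y, x)}"
  have "?S \<subseteq> solutions" using xy diag_point_mem scwr_tisgm_solutions_swap by auto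
  moreover have "card ?S = 3" using xy by auto
  ultimately show ?thesis by blast
qed

lemma card_solutions_eq_one:
  assumes "k \<ge> 4" "th \<ge> theta_c' k \<or> (th < theta_c' k \<and> lam < lambda_cr' k th)"
  shows "card solutions = 1"
  using solutions_eq_diag uniqueness_regime[OF assms] assms(1) by simp

end

theorem mainTheorem11:
  fixes k :: nat and lam th :: real
  assumes "k \<ge> 4" and "lam > 0" and "0 < th" and "th < 1"
  shows "((th \<ge> theta_c' k \<or> (th < theta_c' k \<and> lam < lambda_cr' k th))
           \<longrightarrow> card (scwr_tisgm_solutions k lam th) = 1)
         \<and> ((th < theta_c k \<and> lam > lambda_cr k th)
           \<longrightarrow> (\<exists>A \<subseteq> scwr_tisgm_solutions k lam th. finite A \<and> card A = 3))"
proof -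
  interpret scwr_model k lam th using assms by unfold_locales
  show ?thesis
    using card_solutions_eq_one[OF \<open>k \<ge> 4\<close>] three_solutions \<open>k \<ge> 4\<close> by auto
qed

end
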